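(* Let $n,p\ge 1$, let $f:[-1,1]\to\mathbb{R}$ be a continuous, monotone non-decreasing function, and let $\mathcal{U}=\{\boldsymbol{u}^1,\ldots,\boldsymbol{u}^p\}\subset\mathbb{S}^n$ be a set of unit-quaternion-valued vectors. Define the real $p\times p$ matrix $C$ by $$c_{\eta\xi}=f\!\left(\tfrac{1}{n}\,\mathrm{Re}\{\langle \boldsymbol{u}^\xi,\boldsymbol{u}^\eta\rangle\}\right),\qquad \eta,\xi\in\{1,\ldots,p\}.$$ Suppose $C$ is invertible, let $c^{-1}_{\eta\xi}$ denote the $(\eta,\xi)$-entry of $C^{-1}$, and set $v_i^\xi=\sum_{\eta=1}^p u_i^\eta c^{-1}_{\eta\xi}$ for $i=1,\ldots,n$, $\xi=1,\ldots,p$. Consider the quaternion-valued recurrent projection neural network (QRPNN) which, from a state $\boldsymbol{x}(t)\in\mathbb{S}^n$, computes $$w_\xi(t)=f\!\left(\tfrac{1}{n}\mathrm{Re}\{\langle\boldsymbol{x}(t),\boldsymbol{u}^\xi\rangle\}\right),\qquad a_i(t)=\sum_{\xi=1}^p w_\xi(t)\,v_i^\xi,$$ and updates $x_i(t+1)=\sigma(a_i(t))$ if $0<|a_i(t)|<+\infty$ and $x_i(t+1)=x_i(t)$ otherwise. Then every fundamental memory $\boldsymbol{u}^\gamma$, $\gamma=1,\ldots,p$, is a stationary state (fixed point) of this QRPNN: if $\boldsymbol{x}(t)=\boldsymbol{u}^\gamma$ then $\boldsymbol{x}(t+1)=\boldsymbol{u}^\gamma$.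
   Context: $\mathbb{H}$ denotes the quaternions $q=q_0+q_1\mathbf{i}+q_2\mathbf{j}+q_3\mathbf{k}$ with $\mathbf{i}^2=\mathbf{j}^2=\mathbf{k}^2=\mathbf{ijk}=-1$; $\bar q=q_0-q_1\mathbf{i}-q_2\mathbf{j}-q_3\mathbf{k}$, $|q|=\sqrt{\bar q q}$, $\mathrm{Re}\{q\}=q_0$. $\mathbb{S}=\{q\in\mathbb{H}:|q|=1\}$ is the set of unit quaternions, and $\sigma:\mathbb{H}\setminus\{0\}\to\mathbb{S}$ is $\sigma(q)=q/|q|$. For $\boldsymbol{x},\boldsymbol{y}\in\mathbb{H}^n$ the inner product is $\langle\boldsymbol{x},\boldsymbol{y}\rangle=\sum_{i=1}^n\bar y_i x_i$. *)

theory Defs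
  imports "HOL-Analysis.Analysis"
begin

datatype quat = Quat (q0: real) (q1: real) (q2: real) (q3: real)

instantiation quat :: comm_monoid_add
begin
definition zero_quat_def: "0 = Quat 0 0 0 0"
definition plus_quat_def: "a + b = Quat (q0 a + q0 b) (q1 a + q1 b) (q2 a + q2 b) (q3 a + q3 b)"
instance by standard (auto simp: zero_quat_def plus_quat_def)
end

text \<open>Hamilton product, with i^2 = j^2 = k^2 = ijk = -1.\<close>
instantiation quat :: times
begin
definition times_quat_def: "a * b = Quat
   (q0 a * q0 b - q1 a * q1 b - q2 a * q2 b - q3 a * q3 b)
   (q0 a * q1 b + q1 a * q0 b + q2 a * q3 b - q3 a * q2 b)
   (q0 a * q2 b - q1 a * q3 b + q2 a * q0 b + q3 a * q1 b)
   (q0 a * q3 b + q1 a * q2 b - q2 a * q1 b + q3 a * q0 b)"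
instance ..
end

definition qreal :: "real \<Rightarrow> quat" where "qreal r = Quat r 0 0 0"
definition qcnj :: "quat \<Rightarrow> quat" where "qcnj q = Quat (q0 q) (- q1 q) (- q2 q) (- q3 q)"
definition qRe :: "quat \<Rightarrow> real" where "qRe q = q0 q"
definition qnorm :: "quat \<Rightarrow> real" where "qnorm q = sqrt (qRe (qcnj q * q))"
definition qsigma :: "quat \<Rightarrow> quat" where "qsigma q = qreal (1 / qnorm q) * q"

text \<open>Quaternionic vectors are functions from a finite index type 'n (n = CARD('n)).
  Inner product <x,y> = sum_i conj(y_i) x_i.\<close>
definition qinner :: "('n::finite \<Rightarrow> quat) \<Rightarrow> ('n \<Rightarrow> quat) \<Rightarrow> quat" where
  "qinner x y = (\<Sum>i\<in>UNIV. qcnj (y i) * x i)"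

text \<open>Fundamental memories u :: 'p => 'n => quat (u xi = u^xi), p = CARD('p).\<close>
definition corr_matrix :: "(real \<Rightarrow> real) \<Rightarrow> ('p::finite \<Rightarrow> 'n::finite \<Rightarrow> quat) \<Rightarrow> real^'p^'p" where
  "corr_matrix f u = (\<chi> \<eta> \<xi>. f (qRe (qinner (u \<xi>) (u \<eta>)) / real CARD('n)))"

definition qrpnn_v :: "(real \<Rightarrow> real) \<Rightarrow> ('p::finite \<Rightarrow> 'n::finite \<Rightarrow> quat) \<Rightarrow> 'p \<Rightarrow> 'n \<Rightarrow> quat" where
  "qrpnn_v f u \<xi> i = (\<Sum>\<eta>\<in>UNIV. u \<eta> i * qreal (matrix_inv (corr_matrix f u) $ \<eta> $ \<xi>))"

definition qrpnn_w :: "(real \<Rightarrow> real) \<Rightarrow> ('p::finite \<Rightarrow> 'n::finite \<Rightarrow> quat) \<Rightarrow> ('n \<Rightarrow> quat) \<Rightarrow> 'p \<Rightarrow> real" where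
  "qrpnn_w f u x \<xi> = f (qRe (qinner x (u \<xi>)) / real CARD('n))"

definition qrpnn_a :: "(real \<Rightarrow> real) \<Rightarrow> ('p::finite \<Rightarrow> 'n::finite \<Rightarrow> quat) \<Rightarrow> ('n \<Rightarrow> quat) \<Rightarrow> 'n \<Rightarrow> quat" where
  "qrpnn_a f u x i = (\<Sum>\<xi>\<in>UNIV. qreal (qrpnn_w f u x \<xi>) * qrpnn_v f u \<xi> i)"

text \<open>One synchronous update step; |a| < +infinity holds automatically here.\<close>
definition qrpnn_step :: "(real \<Rightarrow> real) \<Rightarrow> ('p::finite \<Rightarrow> 'n::finite \<Rightarrow> quat) \<Rightarrow> ('n \<Rightarrow> quat) \<Rightarrow> 'n \<Rightarrow> quat" where
  "qrpnn_step f u x i = (let a = qrpnn_a f u x i in if 0 < qnorm a then qsigma a else x i)"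

end

theory Submission
  imports Defs
begin

text \<open>The weights \<open>v\<^sup>\<xi>\<close> are built from the columns of \<open>C\<^sup>-\<^sup>1\<close>, and when the network is fed
  the memory \<open>u\<^sup>\<gamma>\<close> its similarity weights are exactly the \<open>\<gamma>\<close>-th column of the correlation
  matrix \<open>C\<close>. Since all coefficients are real, they commute with the quaternions, so the
  activation is \<open>a\<^sub>i = \<Sum>\<^sub>\<eta> u\<^sup>\<eta>\<^sub>i (C\<^sup>-\<^sup>1 C)\<^sub>\<eta>\<^sub>\<gamma> = u\<^sup>\<gamma>\<^sub>i\<close>, a unit quaternion, which \<open>\<sigma>\<close> leaves fixed.\<close>

lemma quat_sum_components [simp]:
  "q0 (sum g A) = (\<Sum>x\<in>A. q0 (g x))" "q1 (sum g A) = (\<Sum>x\<in>A. q1 (g x))"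
  "q2 (sum g A) = (\<Sum>x\<in>A. q2 (g x))" "q3 (sum g A) = (\<Sum>x\<in>A. q3 (g x))"
  by (induction A rule: infinite_finite_induct) (auto simp: zero_quat_def plus_quat_def)

lemma qreal_mult: "qreal r * q = Quat (r * q0 q) (r * q1 q) (r * q2 q) (r * q3 q)"
  by (simp add: qreal_def times_quat_def)

lemma mult_qreal: "q * qreal r = Quat (r * q0 q) (r * q1 q) (r * q2 q) (r * q3 q)"
  by (simp add: qreal_def times_quat_def mult.commute)

lemma qsigma_unit: "qnorm q = 1 \<Longrightarrow> qsigma q = q"
  by (simp add: qsigma_def qreal_mult)

lemma sum_qreal_mult_swap:
  fixes a :: "'a \<Rightarrow> real" and b :: "'b \<Rightarrow> 'a \<Rightarrow> real" and x :: "'b \<Rightarrow> quat"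
  assumes "finite A" "finite B"
  shows "(\<Sum>\<xi>\<in>A. qreal (a \<xi>) * (\<Sum>\<eta>\<in>B. x \<eta> * qreal (b \<eta> \<xi>)))
       = (\<Sum>\<eta>\<in>B. x \<eta> * qreal (\<Sum>\<xi>\<in>A. b \<eta> \<xi> * a \<xi>))"
  using assms
  by (intro quat.expand conjI)
    (simp_all add: qreal_mult mult_qreal sum_distrib_left sum_distrib_right mult_ac sum.swap[of _ A B])

lemma matrix_inv_mult_left:
  fixes A :: "'a::semiring_1^'n^'m"
  assumes "invertible A"
  shows "matrix_inv A ** A = mat 1"
  using someI_ex[OF assms[unfolded invertible_def]] unfolding matrix_inv_def by blast

lemma qrpnn_a_fundamental_memory:
  assumes "invertible (corr_matrix f u)"
  shows "qrpnn_a f u (u \<gamma>) i = u \<gamma> i"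
proof -
  let ?C = "corr_matrix f u"
  have "qrpnn_a f u (u \<gamma>) i
      = (\<Sum>\<eta>\<in>UNIV. u \<eta> i * qreal (\<Sum>\<xi>\<in>UNIV. matrix_inv ?C $ \<eta> $ \<xi> * ?C $ \<xi> $ \<gamma>))"
    unfolding qrpnn_a_def qrpnn_v_def qrpnn_w_def
    by (subst sum_qreal_mult_swap) (simp_all add: corr_matrix_def)
  also have "\<dots> = (\<Sum>\<eta>\<in>UNIV. u \<eta> i * qreal ((matrix_inv ?C ** ?C) $ \<eta> $ \<gamma>))"
    by (simp add: matrix_matrix_mult_def)
  also have "\<dots> = u \<gamma> i"
    using matrix_inv_mult_left[OF assms]
    by (simp add: mat_def mult_qreal if_distrib zero_quat_def[symmetric] cong: if_cong)
  finally show ?thesis .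
qed

theorem theorem1:
  fixes f :: "real \<Rightarrow> real"
    and u :: "'p::finite \<Rightarrow> 'n::finite \<Rightarrow> quat"
    and \<gamma> :: 'p
  assumes "continuous_on {-1..1} f"
    and "mono_on {-1..1} f"
    and "\<And>\<xi> i. qnorm (u \<xi> i) = 1"
    and "invertible (corr_matrix f u)"
  shows "qrpnn_step f u (u \<gamma>) = u \<gamma>"
proof
  fix i
  show "qrpnn_step f u (u \<gamma>) i = u \<gamma> i"
    using qrpnn_a_fundamental_memory[OF assms(4)] qsigma_unit assms(3)
    by (simp add: qrpnn_step_def)
qed

end
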